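(* Let $d$ be a positive square-free integer with $d\equiv 3\pmod 4$, and let $\chi_{-d}$ be the quadratic Dirichlet character of $\mathbb{Q}(\sqrt{-d})$. For a positive integer $n$ let $F(n) = n\prod_{p\mid n} \left(1+\chi_{-d}(p)p^{-1} \right)$. Let $a$ be a positive integer such that every prime dividing $a$ divides $d$. Then for every integer $r$, \[ \#\{n\ge 1:\ n\equiv r \pmod{a},\ F(n)<X\} = \frac{C}{a} X + o(X)\qquad (X\to\infty), \] where $C=\prod_{p} \left(1-p^{-1}+(p+\chi_{-d}(p))^{-1}\right)$, the product being over all primes.
   Context: $\chi_{-d}(p)=\left(\frac{-d}{p}\right)$ (Legendre symbol) for odd primes $p$, and $\chi_{-d}(2)=(-1)^{(d^2-1)/8}$. *)

theory Defs
  imports "HOL-Number_Theory.Number_Theory" "HOL-Computational_Algebra.Squarefree"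
    "HOL-Library.Landau_Symbols" "HOL-Analysis.Analysis"
begin

text \<open>The quadratic character chi_{-d} evaluated at primes p:
  Legendre symbol (-d / p) for odd p, and (-1)^((d^2-1)/8) at p = 2.\<close>
definition chi :: "int \<Rightarrow> nat \<Rightarrow> int" where
  "chi d p = (if p = 2 then (-1) ^ nat ((d^2 - 1) div 8) else Legendre (-d) (int p))"

definition Ffun :: "int \<Rightarrow> nat \<Rightarrow> real" where
  "Ffun d n = real n * (\<Prod>p\<in>prime_factors n. 1 + real_of_int (chi d p) / real p)"

definition Cconst :: "int \<Rightarrow> real" where
  "Cconst d = (\<Prod>p. if prime p then 1 - 1 / real p + 1 / (real p + real_of_int (chi d p)) else 1)"

end

theory Submission
  imports Defs "HOL-Real_Asymp.Real_Asymp"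
begin

(*
  Write F(n) = n h(n) l(n), where h(n) = small_part d P n collects the factors 1 + chi(p)/p of the
  primes p < P dividing n (those dividing d contribute 1, since chi(p) = 0 there) and
  l(n) = large_part d P n those of the primes p >= P. As h is periodic modulo the product Q of the
  primes p < P not dividing d, and Q is coprime to a, the n = r (mod a) with n h(n) < Y number
  Y/(aQ) * sum_{t<Q} 1/h(t) + O(aQ); by the Chinese remainder theorem this mean of 1/h is the
  partial Euler product prod_{p<P} (1 - 1/p + 1/(p + chi(p))).
  Both l(n) and 1/l(n) are at most E(n) = prod_{p | n, p >= P} p/(p - 1), and expanding E(n)^2 as
  a sum over squarefree divisors shows that E(n)^2 has mean at most exp(4/(P - 1)) on [1, N].
  Hence the conditions F(n) < X and n h(n) < X agree up to a factor 1 + eta outside a set of size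
  O((exp(4/(P - 1)) - 1) X / eta), and a weighted form of the same moment bound shows that only
  O(X/K) integers n > K X satisfy F(n) < X. As P tends to infinity the partial Euler products
  tend to C.
*)

lemma prod_subset_prime_factors_dvd:
  fixes n :: nat
  assumes "S \<subseteq> prime_factors n"
  shows "\<Prod>S dvd n"
proof (cases "n = 0")
  case False
  have "mset_set S \<subseteq># mset_set (prime_factors n)"
    using assms by (intro subset_imp_msubset_mset_set) auto
  also have "\<dots> \<subseteq># prime_factorization n"
    by (rule mset_set_set_mset_msubset)
  finally have "\<Prod>S dvd prod_mset (prime_factorization n)"
    by (simp add: prod_unfold_prod_mset prod_mset_subset_imp_dvd)
  with False show ?thesis
    by (simp add: prod_mset_prime_factorization)
qed simp

lemma card_multiples_le:
  fixes q N :: nat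
  assumes "q > 0"
  shows "real (card {n\<in>{1..N}. q dvd n}) \<le> real N / real q"
proof -
  have "{n\<in>{1..N}. q dvd n} \<subseteq> (*) q ` {1..N div q}"
  proof
    fix n assume "n \<in> {n\<in>{1..N}. q dvd n}"
    then obtain k where k: "n = q * k" "1 \<le> q * k" "q * k \<le> N" by auto
    then have "1 \<le> k" "k \<le> N div q"
      using assms by (auto simp: less_eq_div_iff_mult_less_eq mult.commute)
    with k show "n \<in> (*) q ` {1..N div q}" by auto
  qed
  then have "card {n\<in>{1..N}. q dvd n} \<le> N div q"
    by (metis (no_types, lifting) card_atLeastAtMost card_image_le card_mono diff_Suc_1
        finite_atLeastAtMost finite_imageI le_trans)
  then have "real (card {n\<in>{1..N}. q dvd n}) \<le> real (N div q)" by simp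
  also have "real (N div q) \<le> real N / real q"
    using assms div_times_less_eq_dividend[of N q]
    by (simp add: pos_le_divide_eq flip: of_nat_mult)
  finally show ?thesis .
qed

lemma sum_inverse_squares_interval_le:
  assumes "m \<ge> 1"
  shows "(\<Sum>k\<in>{m..<m+j}. 1 / real k ^ 2) \<le> 2 / real m - 2 / real (m + j)"
proof (induction j)
  case (Suc j)
  have "1 / x ^ 2 \<le> 2 / x - 2 / (x + 1)" if "x \<ge> 1" for x :: real
    using that by (simp add: divide_simps power2_eq_square algebra_simps add_pos_pos)
  from this[of "real (m + j)"]
  have "1 / real (m + j) ^ 2 \<le> 2 / real (m + j) - 2 / real (m + Suc j)"
    using assms by (simp add: add.commute)
  moreover have "{m..<m + Suc j} = insert (m + j) {m..<m + j}" by auto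
  ultimately show ?case using Suc by simp
qed simp

lemma sum_inverse_squares_gt_le:
  fixes K :: "nat set"
  assumes "t > 0" "finite K" "\<And>k. k \<in> K \<Longrightarrow> t < real k"
  shows "(\<Sum>k\<in>K. 1 / real k ^ 2) \<le> 2 / t"
proof -
  define m where "m = nat \<lfloor>t\<rfloor> + 1"
  have m: "m \<ge> 1" "real m > t" using assms(1) by (auto simp: m_def) linarith
  obtain j where "K \<subseteq> {..<j}" using assms(2) finite_nat_bounded by blast
  moreover have "m \<le> k" if "k \<in> K" for k
    using assms(1) assms(3)[OF that] unfolding m_def by linarith
  ultimately have "K \<subseteq> {m..<m+j}" by force
  then have "(\<Sum>k\<in>K. 1 / real k ^ 2) \<le> (\<Sum>k\<in>{m..<m+j}. 1 / real k ^ 2)"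
    by (intro sum_mono2) auto
  also have "\<dots> \<le> 2 / real m - 2 / real (m + j)"
    by (rule sum_inverse_squares_interval_le[OF m(1)])
  also have "\<dots> \<le> 2 / real m" by simp
  also have "\<dots> \<le> 2 / t" using m assms(1) by (simp add: frac_le)
  finally show ?thesis .
qed

lemma sum_inverse_squares_multiples_gt_le:
  fixes q N :: nat
  assumes "q > 0" "Y > 0"
  shows "(\<Sum>n\<in>{n\<in>{1..N}. Y < real n \<and> q dvd n}. 1 / real n ^ 2) \<le> 2 / (real q * Y)"
proof -
  let ?K = "{k\<in>{1..N}. Y < real (q * k)}"
  have "{n\<in>{1..N}. Y < real n \<and> q dvd n} \<subseteq> (*) q ` ?K"
  proof
    fix n assume "n \<in> {n\<in>{1..N}. Y < real n \<and> q dvd n}"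
    then obtain k where k: "n = q * k" "1 \<le> q * k" "q * k \<le> N" "Y < real n" by auto
    then have "1 \<le> k" "k \<le> N"
      using assms(1) by (auto intro: le_trans[of k "q * k"])
    with k show "n \<in> (*) q ` ?K" by auto
  qed
  then have "(\<Sum>n\<in>{n\<in>{1..N}. Y < real n \<and> q dvd n}. 1 / real n ^ 2)
      \<le> (\<Sum>n\<in>(*) q ` ?K. 1 / real n ^ 2)"
    by (intro sum_mono2) auto
  also have "\<dots> = (\<Sum>k\<in>?K. 1 / real k ^ 2) / real q ^ 2"
    using assms(1)
    by (subst sum.reindex) (auto simp: inj_on_def sum_divide_distrib power_mult_distrib ac_simps)
  also have "\<dots> \<le> (2 / (Y / real q)) / real q ^ 2"
    using assms by (intro divide_right_mono sum_inverse_squares_gt_le) (auto simp: field_simps)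
  also have "\<dots> = 2 / (real q * Y)"
    using assms by (simp add: field_simps power2_eq_square)
  finally show ?thesis .
qed

lemma finite_card_le_if_segments_le:
  fixes S :: "nat set"
  assumes "\<And>N. real (card (S \<inter> {..N})) \<le> b"
  shows "finite S" "real (card S) \<le> b"
proof -
  show "finite S"
  proof (rule ccontr)
    assume "infinite S"
    then obtain B where B: "B \<subseteq> S" "finite B" "card B = nat \<lceil>b\<rceil> + 1"
      using infinite_arbitrarily_large by blast
    then have "card B \<le> card (S \<inter> {..Max B})"
      by (intro card_mono) auto
    then show False using assms[of "Max B"] B(3) by linarith
  qed
  then obtain k where "S \<subseteq> {..<k}" using finite_nat_bounded by blast
  then have "S \<inter> {..k} = S" by auto
  then show "real (card S) \<le> b" using assms[of k] by simp
qed

lemma sum_mod_mult_coprime: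
  fixes f g :: "nat \<Rightarrow> 'a::comm_semiring_1"
  assumes "coprime m n" "m > 0" "n > 0"
  shows "(\<Sum>t<m*n. f (t mod m) * g (t mod n)) = (\<Sum>t<m. f t) * (\<Sum>t<n. g t)"
proof -
  let ?h = "\<lambda>t. (t mod m, t mod n)"
  have "inj_on ?h {..<m*n}"
  proof (rule inj_onI)
    fix s t assume "s \<in> {..<m*n}" "t \<in> {..<m*n}" "?h s = ?h t"
    moreover from \<open>?h s = ?h t\<close> have "[s = t] (mod m * n)"
      using assms(1)
      by (intro coprime_cong_mult_nat) (auto simp: unique_euclidean_semiring_class.cong_def)
    ultimately show "s = t" using cong_less_imp_eq_nat by auto
  qed
  moreover have "?h ` {..<m*n} \<subseteq> {..<m} \<times> {..<n}" using assms by auto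
  moreover have "card (?h ` {..<m*n}) = card ({..<m} \<times> {..<n})"
    using calculation(1) by (simp add: card_image card_cartesian_product)
  ultimately have "bij_betw ?h {..<m*n} ({..<m} \<times> {..<n})"
    by (simp add: bij_betw_def card_subset_eq)
  then have "(\<Sum>t<m*n. f (t mod m) * g (t mod n)) = (\<Sum>(x,y)\<in>{..<m} \<times> {..<n}. f x * g y)"
    by (rule sum.reindex_bij_betw[of ?h, where g = "\<lambda>(x,y). f x * g y", simplified])
  also have "\<dots> = (\<Sum>t<m. f t) * (\<Sum>t<n. g t)"
    by (simp add: sum.cartesian_product[symmetric] sum_product)
  finally show ?thesis .
qed

lemma residue_class_less_eq_image:
  fixes M t :: nat
  assumes "t < M"
  shows "{n. n mod M = t \<and> real n < Y}
    = (\<lambda>k. t + M * k) ` {..<nat \<lceil>(Y - real t) / real M\<rceil>}"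
proof -
  have bound: "real (t + M * k) < Y \<longleftrightarrow> k < nat \<lceil>(Y - real t) / real M\<rceil>" for k
  proof -
    have "k < nat \<lceil>(Y - real t) / real M\<rceil> \<longleftrightarrow> real k < (Y - real t) / real M"
      by (simp add: zless_nat_eq_int_zless less_ceiling_iff)
    also have "\<dots> \<longleftrightarrow> real (t + M * k) < Y"
      using assms by (simp add: pos_less_divide_eq algebra_simps)
    finally show ?thesis ..
  qed
  show ?thesis
  proof (intro equalityI subsetI)
    fix n assume n: "n \<in> {n. n mod M = t \<and> real n < Y}"
    then have "n = t + M * (n div M)" using mod_mult_div_eq[of n M] by simp
    with n have "n = t + M * (n div M)" "n div M < nat \<lceil>(Y - real t) / real M\<rceil>"
      using bound[of "n div M"] by auto
    then show "n \<in> (\<lambda>k. t + M * k) ` {..<nat \<lceil>(Y - real t) / real M\<rceil>}" by blast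
  next
    fix n assume "n \<in> (\<lambda>k. t + M * k) ` {..<nat \<lceil>(Y - real t) / real M\<rceil>}"
    then obtain k where "n = t + M * k" "k < nat \<lceil>(Y - real t) / real M\<rceil>" by auto
    then show "n \<in> {n. n mod M = t \<and> real n < Y}" using assms bound[of k] by simp
  qed
qed

lemma card_residue_class_less:
  fixes M t :: nat
  assumes "t < M" "Y \<ge> 0"
  shows "finite {n. 1 \<le> n \<and> n mod M = t \<and> real n < Y}"
    and "\<bar>real (card {n. 1 \<le> n \<and> n mod M = t \<and> real n < Y}) - Y / real M\<bar> \<le> 2"
proof -
  define k0 where "k0 = nat \<lceil>(Y - real t) / real M\<rceil>"
  let ?A = "{n. n mod M = t \<and> real n < Y}"
  let ?B = "{n. 1 \<le> n \<and> n mod M = t \<and> real n < Y}"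
  have "inj (\<lambda>k. t + M * k)" using assms(1) by (auto simp: inj_def)
  then have A: "finite ?A" "card ?A = k0"
    using residue_class_less_eq_image[OF assms(1), of Y] by (auto simp: k0_def card_image inj_on_def)
  have "?B = ?A - {0}" by auto
  then show "finite ?B" using A by simp
  have "card ?B \<le> k0" "k0 \<le> card ?B + 1"
    using A \<open>?B = ?A - {0}\<close> by (auto simp: card_Diff_singleton_if)
  then have card: "real (card ?B) \<le> real k0" "real k0 \<le> real (card ?B) + 1" by linarith+
  have "real t / real M < 1" using assms(1) by simp
  then have "(Y - real t) / real M > Y / real M - 1" "(Y - real t) / real M \<le> Y / real M"
    using assms by (auto simp: diff_divide_distrib)
  moreover have "real k0 \<ge> (Y - real t) / real M" "real k0 \<le> max 0 ((Y - real t) / real M) + 1"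
    unfolding k0_def by linarith+
  moreover have "Y / real M \<ge> 0" using assms by simp
  ultimately show "\<bar>real (card ?B) - Y / real M\<bar> \<le> 2" using card by linarith
qed

section \<open>Averages of divisor weights\<close>

definition divisor_weight :: "(nat \<Rightarrow> real) \<Rightarrow> nat set \<Rightarrow> nat \<Rightarrow> real" where
  "divisor_weight c S n = (\<Prod>p\<in>{p\<in>S. p dvd n}. c p)"

lemma divisor_weight_mod:
  assumes "finite S" "\<Prod>S dvd M"
  shows "divisor_weight c S (n mod M) = divisor_weight c S n"
proof -
  have "p dvd M" if "p \<in> S" for p
    using dvd_prodI[OF assms(1) that, of "\<lambda>x. x"] assms(2) by (rule dvd_trans)
  then have "{p\<in>S. p dvd n mod M} = {p\<in>S. p dvd n}"
    by (auto simp: dvd_mod_iff)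
  then show ?thesis by (simp add: divisor_weight_def)
qed

lemma sum_inverse_divisor_weight:
  assumes "finite S" "\<And>p. p \<in> S \<Longrightarrow> prime p"
  shows "(\<Sum>t<\<Prod>S. 1 / divisor_weight c S t) = (\<Prod>p\<in>S. real p - 1 + 1 / c p)"
  using assms
proof (induction S rule: finite_induct)
  case empty
  then show ?case by (simp add: divisor_weight_def)
next
  case (insert p S)
  have p: "prime p" "p > 0" using insert.prems by (auto simp: prime_gt_0_nat)
  have "\<Prod>S > 0" using insert.prems by (intro prod_pos) (auto simp: prime_gt_0_nat)
  have "coprime p (\<Prod>S)"
    using insert by (intro prod_coprime_right primes_coprime) auto
  define f where "f s = (if s = 0 then 1 / c p else 1)" for s :: nat
  have split: "1 / divisor_weight c (insert p S) t = f (t mod p) * (1 / divisor_weight c S (t mod \<Prod>S))"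
    for t
  proof (cases "p dvd t")
    case True
    then have "{q\<in>insert p S. q dvd t} = insert p {q\<in>S. q dvd t}" by auto
    then have "divisor_weight c (insert p S) t = c p * divisor_weight c S t"
      using insert(1,2) by (simp add: divisor_weight_def)
    with True show ?thesis
      using insert(1) by (simp add: divisor_weight_mod f_def dvd_eq_mod_eq_0)
  next
    case False
    then have "{q\<in>insert p S. q dvd t} = {q\<in>S. q dvd t}" by auto
    then have "divisor_weight c (insert p S) t = divisor_weight c S t"
      by (simp add: divisor_weight_def)
    with False show ?thesis
      using insert(1) by (simp add: divisor_weight_mod f_def dvd_eq_mod_eq_0)
  qed
  have "(\<Sum>t<p. f t) = real p - 1 + 1 / c p"
  proof -
    have "{..<p} = insert 0 {1..<p}" using p by auto
    then show ?thesis using p by (simp add: f_def of_nat_diff)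
  qed
  have "(\<Sum>t<\<Prod>(insert p S). 1 / divisor_weight c (insert p S) t)
      = (\<Sum>t<p * \<Prod>S. f (t mod p) * (1 / divisor_weight c S (t mod \<Prod>S)))"
    by (simp only: split) (use insert(1,2) in simp)
  also have "\<dots> = (\<Sum>t<p. f t) * (\<Sum>t<\<Prod>S. 1 / divisor_weight c S t)"
    by (rule sum_mod_mult_coprime[OF \<open>coprime p (\<Prod>S)\<close> p(2) \<open>\<Prod>S > 0\<close>])
  finally show ?case using insert \<open>(\<Sum>t<p. f t) = _\<close> by simp
qed

section \<open>The local factors of F\<close>

lemma abs_chi_le_1: "prime p \<Longrightarrow> \<bar>chi d p\<bar> \<le> 1"
  unfolding chi_def Legendre_def by (auto simp: power_abs)

lemma chi_eq_0_if_dvd: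
  assumes "odd d" "int p dvd d"
  shows "chi d p = 0"
proof -
  have "p \<noteq> 2" using assms by auto
  moreover have "[- d = 0] (mod int p)" using assms(2) by (simp add: cong_0_iff)
  ultimately show ?thesis unfolding chi_def Legendre_def by simp
qed

definition local_factor :: "int \<Rightarrow> nat \<Rightarrow> real" where
  "local_factor d p = 1 + real_of_int (chi d p) / real p"

lemma Ffun_eq_prod_local_factor: "Ffun d n = real n * (\<Prod>p\<in>prime_factors n. local_factor d p)"
  by (simp add: Ffun_def local_factor_def)

lemma local_factor_eq_1_if_dvd: "odd d \<Longrightarrow> int p dvd d \<Longrightarrow> local_factor d p = 1"
  by (simp add: local_factor_def chi_eq_0_if_dvd)

lemma
  assumes "prime p"
  shows local_factor_pos: "local_factor d p > 0"
    and local_factor_le: "local_factor d p \<le> real p / (real p - 1)"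
    and inverse_local_factor_le: "1 / local_factor d p \<le> real p / (real p - 1)"
proof -
  have p: "real p \<ge> 2" using prime_ge_2_nat[OF assms] by simp
  have "\<bar>real_of_int (chi d p)\<bar> \<le> 1" using abs_chi_le_1[OF assms, of d] by linarith
  then have "\<bar>real_of_int (chi d p) / real p\<bar> \<le> 1 / real p"
    using p by (simp add: abs_div divide_right_mono)
  moreover have "(real p - 1) / real p = 1 - 1 / real p" using p by (simp add: field_simps)
  ultimately have lower: "(real p - 1) / real p \<le> local_factor d p"
    and upper: "local_factor d p \<le> 1 + 1 / real p"
    unfolding local_factor_def by linarith+
  moreover have "(real p - 1) / real p > 0" using p by simp
  ultimately show pos: "local_factor d p > 0" by linarith
  have "1 + 1 / real p \<le> real p / (real p - 1)"
    using p by (simp add: field_simps)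
  with upper show "local_factor d p \<le> real p / (real p - 1)" by linarith
  have "1 / local_factor d p \<le> 1 / ((real p - 1) / real p)"
    using p pos lower by (intro divide_left_mono) auto
  then show "1 / local_factor d p \<le> real p / (real p - 1)" by simp
qed

definition small_primes :: "int \<Rightarrow> nat \<Rightarrow> nat set" where
  "small_primes d P = {p. prime p \<and> p < P \<and> \<not> int p dvd d}"

definition small_part :: "int \<Rightarrow> nat \<Rightarrow> nat \<Rightarrow> real" where
  "small_part d P = divisor_weight (local_factor d) (small_primes d P)"

definition large_part :: "int \<Rightarrow> nat \<Rightarrow> nat \<Rightarrow> real" where
  "large_part d P n = (\<Prod>p\<in>{p\<in>prime_factors n. P \<le> p}. local_factor d p)"

definition large_excess :: "nat \<Rightarrow> nat \<Rightarrow> real" where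
  "large_excess P n = (\<Prod>p\<in>{p\<in>prime_factors n. P \<le> p}. real p / (real p - 1))"

lemma finite_small_primes: "finite (small_primes d P)"
  by (rule finite_subset[of _ "{..<P}"]) (auto simp: small_primes_def)

lemma prod_small_primes_pos: "\<Prod>(small_primes d P) > 0"
  by (rule prod_pos) (auto simp: small_primes_def prime_gt_0_nat)

lemma small_part_pos: "small_part d P n > 0"
  unfolding small_part_def divisor_weight_def
  by (rule prod_pos) (auto simp: small_primes_def intro: local_factor_pos)

lemma large_part_pos: "large_part d P n > 0"
  unfolding large_part_def by (rule prod_pos) (auto intro: local_factor_pos)

lemma one_le_large_excess: "large_excess P n \<ge> 1"
  unfolding large_excess_def
  by (rule prod_ge_1) (auto simp: in_prime_factors_iff dest!: prime_gt_1_nat)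

lemma prod_local_factor_eq_small_large:
  assumes "odd d" "n > 0"
  shows "(\<Prod>p\<in>prime_factors n. local_factor d p) = small_part d P n * large_part d P n"
proof -
  let ?A = "{p\<in>prime_factors n. p < P}" and ?B = "{p\<in>prime_factors n. P \<le> p}"
  have "prime_factors n = ?A \<union> ?B" "?A \<inter> ?B = {}" by auto
  then have "(\<Prod>p\<in>prime_factors n. local_factor d p)
      = (\<Prod>p\<in>?A. local_factor d p) * (\<Prod>p\<in>?B. local_factor d p)"
    by (metis finite_set_mset prod.union_disjoint finite_Un)
  moreover have "(\<Prod>p\<in>?A. local_factor d p) = small_part d P n"
    unfolding small_part_def divisor_weight_def
  proof (rule prod.mono_neutral_right)
    show "{p \<in> small_primes d P. p dvd n} \<subseteq> ?A"
      using assms(2) by (auto simp: small_primes_def in_prime_factors_iff)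
    show "\<forall>p\<in>?A - {p \<in> small_primes d P. p dvd n}. local_factor d p = 1"
      using assms(1) by (auto simp: small_primes_def in_prime_factors_iff local_factor_eq_1_if_dvd)
  qed simp
  ultimately show ?thesis by (simp add: large_part_def)
qed

lemma large_part_le_large_excess: "large_part d P n \<le> large_excess P n"
  unfolding large_part_def large_excess_def
  by (rule prod_mono) (auto intro: less_imp_le local_factor_pos local_factor_le)

lemma inverse_prod_local_factor:
  "1 / (\<Prod>p\<in>A. local_factor d p) = (\<Prod>p\<in>A. 1 / local_factor d p)"
  by (simp add: prod_dividef)

lemma inverse_large_part_le_large_excess: "1 / large_part d P n \<le> large_excess P n"
  unfolding large_part_def large_excess_def inverse_prod_local_factor
  by (rule prod_mono) (auto intro: inverse_local_factor_le less_imp_le local_factor_pos)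

lemma inverse_prod_local_factor_le_large_excess:
  "1 / (\<Prod>p\<in>prime_factors n. local_factor d p) \<le> large_excess 2 n"
proof -
  have "1 / (\<Prod>p\<in>prime_factors n. local_factor d p)
      \<le> (\<Prod>p\<in>prime_factors n. real p / (real p - 1))"
    unfolding inverse_prod_local_factor
    by (rule prod_mono) (auto intro: inverse_local_factor_le less_imp_le local_factor_pos)
  also have "\<dots> = large_excess 2 n" unfolding large_excess_def
    by (rule prod.cong) (auto simp: in_prime_factors_iff dest: prime_ge_2_nat)
  finally show ?thesis .
qed

lemma inverse_small_part_le_large_excess:
  assumes "n > 0"
  shows "1 / small_part d P n \<le> large_excess 2 n"
proof -
  let ?A = "{p\<in>small_primes d P. p dvd n}"
  have "1 / small_part d P n \<le> (\<Prod>p\<in>?A. real p / (real p - 1))"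
    unfolding small_part_def divisor_weight_def inverse_prod_local_factor
    by (rule prod_mono)
      (auto simp: small_primes_def intro: inverse_local_factor_le less_imp_le local_factor_pos)
  also have "\<dots> \<le> (\<Prod>p\<in>prime_factors n. real p / (real p - 1))"
    using assms by (intro prod_mono2)
      (auto simp: small_primes_def in_prime_factors_iff dest: prime_gt_1_nat)
  also have "\<dots> = large_excess 2 n" unfolding large_excess_def
    by (rule prod.cong) (auto simp: in_prime_factors_iff dest: prime_ge_2_nat)
  finally show ?thesis .
qed

section \<open>Second moment of the large-prime excess\<close>

definition excess_weight :: "nat \<Rightarrow> real" where
  "excess_weight p = (real p / (real p - 1)) ^ 2 - 1"

definition prime_range :: "nat \<Rightarrow> nat \<Rightarrow> nat set" where
  "prime_range P N = {p. prime p \<and> P \<le> p \<and> p \<le> N}"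

lemma finite_prime_range: "finite (prime_range P N)"
  by (rule finite_subset[of _ "{..N}"]) (auto simp: prime_range_def)

lemma excess_weight_nonneg: "p \<ge> 2 \<Longrightarrow> excess_weight p \<ge> 0"
  unfolding excess_weight_def by (simp add: field_simps)

lemma prod_excess_weight_nonneg: "S \<subseteq> prime_range P N \<Longrightarrow> prod excess_weight S \<ge> 0"
  by (intro prod_nonneg excess_weight_nonneg) (auto simp: prime_range_def dest: prime_ge_2_nat)

lemma excess_weight_div_le:
  assumes "p \<ge> 2"
  shows "excess_weight p / real p \<le> 4 * (1 / (real p - 1) - 1 / real p)"
proof -
  have p: "real p \<ge> 2" using assms by simp
  have "excess_weight p = (real p ^ 2 - (real p - 1) ^ 2) / (real p - 1) ^ 2"
    using p by (simp add: excess_weight_def power_divide diff_divide_distrib)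
  also have "real p ^ 2 - (real p - 1) ^ 2 = 2 * real p - 1"
    by (simp add: power2_eq_square algebra_simps)
  finally have "excess_weight p / real p = (2 * real p - 1) / (real p - 1) / (real p * (real p - 1))"
    by (simp add: power2_eq_square)
  also have "\<dots> \<le> 4 / (real p * (real p - 1))"
    using p by (intro divide_right_mono) (auto simp: pos_divide_le_eq)
  also have "\<dots> = 4 * (1 / (real p - 1) - 1 / real p)"
    using p by (simp add: field_simps)
  finally show ?thesis .
qed

lemma sum_excess_weight_div_le:
  assumes "P \<ge> 2"
  shows "(\<Sum>p\<in>prime_range P N. excess_weight p / real p) \<le> 4 / (real P - 1)"
proof -
  have telescope: "(\<Sum>k\<in>{P..<P+j}. 1 / (real k - 1) - 1 / real k)
      = 1 / (real P - 1) - 1 / (real (P + j) - 1)" for j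
  proof (induction j)
    case (Suc j)
    have "{P..<P + Suc j} = insert (P + j) {P..<P + j}" by auto
    then show ?case using Suc by simp
  qed simp
  have "(\<Sum>p\<in>prime_range P N. excess_weight p / real p)
      \<le> (\<Sum>p\<in>prime_range P N. 4 * (1 / (real p - 1) - 1 / real p))"
    using assms by (intro sum_mono excess_weight_div_le) (auto simp: prime_range_def)
  also have "\<dots> \<le> (\<Sum>p\<in>{P..<P+N}. 4 * (1 / (real p - 1) - 1 / real p))"
    using assms by (intro sum_mono2) (auto simp: prime_range_def field_simps)
  also have "\<dots> = 4 * (1 / (real P - 1) - 1 / (real (P + N) - 1))"
    by (simp only: telescope flip: sum_distrib_left)
  also have "\<dots> \<le> 4 / (real P - 1)" using assms by simp
  finally show ?thesis .
qed

lemma sum_subsets_excess_weight_le: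
  assumes "P \<ge> 2"
  shows "(\<Sum>S\<in>Pow (prime_range P N). prod excess_weight S / real (\<Prod>S)) \<le> exp (4 / (real P - 1))"
proof -
  have "(\<Sum>S\<in>Pow (prime_range P N). prod excess_weight S / real (\<Prod>S))
      = (\<Sum>S\<in>Pow (prime_range P N).
          (\<Prod>p\<in>S. excess_weight p / real p) * (\<Prod>p\<in>prime_range P N - S. 1))"
    by (simp add: prod_dividef)
  also have "\<dots> = (\<Prod>p\<in>prime_range P N. excess_weight p / real p + 1)"
    by (rule prod_add[symmetric]) (rule finite_prime_range)
  also have "\<dots> \<le> (\<Prod>p\<in>prime_range P N. exp (excess_weight p / real p))"
    by (intro prod_mono conjI add_nonneg_nonneg divide_nonneg_nonneg excess_weight_nonneg)
      (auto simp: prime_range_def add.commute[of _ 1] dest: prime_ge_2_nat)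
  also have "\<dots> = exp (\<Sum>p\<in>prime_range P N. excess_weight p / real p)"
    by (simp add: exp_sum finite_prime_range)
  also have "\<dots> \<le> exp (4 / (real P - 1))"
    using sum_excess_weight_div_le[OF assms] by simp
  finally show ?thesis .
qed

text \<open>Expanding \<open>large_excess P n ^ 2 = \<Prod>(1 + excess_weight p)\<close> and swapping the sums turns
  a weighted second moment into sums of \<open>f\<close> over the multiples of products of large primes.\<close>
lemma sum_weighted_large_excess_sq_le:
  assumes "A \<subseteq> {1..N}" "\<And>n. f n \<ge> 0"
  shows "(\<Sum>n\<in>A. f n * large_excess P n ^ 2)
     \<le> (\<Sum>S\<in>Pow (prime_range P N). prod excess_weight S * (\<Sum>n\<in>{n\<in>A. \<Prod>S dvd n}. f n))"
proof -
  let ?U = "prime_range P N"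
  let ?B = "\<lambda>n. {p\<in>prime_factors n. P \<le> p}"
  let ?w = "\<lambda>S. \<Prod>p\<in>S. excess_weight p"
  have finA: "finite A" using assms(1) finite_subset by blast
  have BU: "?B n \<subseteq> ?U" if "n \<in> A" for n
  proof -
    have "n \<le> N" "n > 0" using that assms(1) by auto
    then show ?thesis by (auto simp: prime_range_def in_prime_factors_iff dest: dvd_imp_le)
  qed
  have "f n * large_excess P n ^ 2 = (\<Sum>S\<in>Pow ?U. if S \<subseteq> ?B n then f n * ?w S else 0)"
    if "n \<in> A" for n
  proof -
    have "large_excess P n ^ 2 = (\<Prod>p\<in>?B n. excess_weight p + 1)"
      unfolding large_excess_def excess_weight_def prod_power_distrib by simp
    also have "\<dots> = (\<Sum>S\<in>Pow (?B n). ?w S)"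
      by (subst prod_add) auto
    also have "Pow (?B n) = {S\<in>Pow ?U. S \<subseteq> ?B n}" using BU[OF that] by auto
    finally show ?thesis
      using sum.inter_filter[of "Pow ?U" "\<lambda>S. f n * ?w S" "\<lambda>S. S \<subseteq> ?B n"]
        finite_prime_range[of P N]
      by (simp add: sum_distrib_left)
  qed
  then have "(\<Sum>n\<in>A. f n * large_excess P n ^ 2)
      = (\<Sum>S\<in>Pow ?U. \<Sum>n\<in>A. if S \<subseteq> ?B n then f n * ?w S else 0)"
    by (simp add: sum.swap[of _ A])
  also have "\<dots> \<le> (\<Sum>S\<in>Pow ?U. ?w S * (\<Sum>n\<in>{n\<in>A. \<Prod>S dvd n}. f n))"
  proof (rule sum_mono)
    fix S assume S: "S \<in> Pow ?U"
    have "{n\<in>A. S \<subseteq> ?B n} \<subseteq> {n\<in>A. \<Prod>S dvd n}"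
      by (auto intro: prod_subset_prime_factors_dvd)
    then have "(\<Sum>n\<in>{n\<in>A. S \<subseteq> ?B n}. f n) \<le> (\<Sum>n\<in>{n\<in>A. \<Prod>S dvd n}. f n)"
      using finA assms(2) by (intro sum_mono2) auto
    moreover have "(\<Sum>n\<in>A. if S \<subseteq> ?B n then f n * ?w S else 0)
        = ?w S * (\<Sum>n\<in>{n\<in>A. S \<subseteq> ?B n}. f n)"
      using sum.inter_filter[OF finA, of "\<lambda>n. f n * ?w S" "\<lambda>n. S \<subseteq> ?B n"]
      by (simp add: sum_distrib_left mult.commute)
    ultimately show "(\<Sum>n\<in>A. if S \<subseteq> ?B n then f n * ?w S else 0)
        \<le> ?w S * (\<Sum>n\<in>{n\<in>A. \<Prod>S dvd n}. f n)"
      using S prod_excess_weight_nonneg[of S P N] by (simp add: mult_left_mono)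
  qed
  finally show ?thesis .
qed

lemma sum_large_excess_sq_le:
  assumes "P \<ge> 2"
  shows "(\<Sum>n\<in>{1..N}. large_excess P n ^ 2) \<le> real N * exp (4 / (real P - 1))"
proof -
  have "(\<Sum>n\<in>{1..N}. large_excess P n ^ 2)
      \<le> (\<Sum>S\<in>Pow (prime_range P N). prod excess_weight S * (\<Sum>n\<in>{n\<in>{1..N}. \<Prod>S dvd n}. 1))"
    using sum_weighted_large_excess_sq_le[of "{1..N}" N "\<lambda>_. 1" P] by simp
  also have "\<dots> \<le> (\<Sum>S\<in>Pow (prime_range P N). prod excess_weight S * (real N / real (\<Prod>S)))"
  proof (intro sum_mono mult_left_mono)
    fix S assume S: "S \<in> Pow (prime_range P N)"
    then have "\<Prod>S > 0" by (intro prod_pos) (auto simp: prime_range_def prime_gt_0_nat)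
    then show "(\<Sum>n\<in>{n\<in>{1..N}. \<Prod>S dvd n}. 1) \<le> real N / real (\<Prod>S)"
      using card_multiples_le[of "\<Prod>S" N] by simp
    show "prod excess_weight S \<ge> 0" using S by (intro prod_excess_weight_nonneg) simp
  qed
  also have "\<dots> = real N * (\<Sum>S\<in>Pow (prime_range P N). prod excess_weight S / real (\<Prod>S))"
    by (simp add: sum_distrib_left mult.commute)
  also have "\<dots> \<le> real N * exp (4 / (real P - 1))"
    using sum_subsets_excess_weight_le[OF assms] by (intro mult_left_mono) auto
  finally show ?thesis .
qed

lemma sum_large_excess_sq_div_sq_le:
  assumes "Y > 0"
  shows "(\<Sum>n\<in>{n\<in>{1..N}. Y < real n}. large_excess 2 n ^ 2 / real n ^ 2) \<le> 2 * exp 4 / Y"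
proof -
  let ?A = "{n\<in>{1..N}. Y < real n}"
  have "(\<Sum>n\<in>?A. large_excess 2 n ^ 2 / real n ^ 2) = (\<Sum>n\<in>?A. 1 / real n ^ 2 * large_excess 2 n ^ 2)"
    by simp
  also have "\<dots> \<le> (\<Sum>S\<in>Pow (prime_range 2 N).
      prod excess_weight S * (\<Sum>n\<in>{n\<in>?A. \<Prod>S dvd n}. 1 / real n ^ 2))"
    by (rule sum_weighted_large_excess_sq_le) auto
  also have "\<dots> \<le> (\<Sum>S\<in>Pow (prime_range 2 N). prod excess_weight S * (2 / (real (\<Prod>S) * Y)))"
  proof (intro sum_mono mult_left_mono)
    fix S assume S: "S \<in> Pow (prime_range 2 N)"
    then have "\<Prod>S > 0" by (intro prod_pos) (auto simp: prime_range_def prime_gt_0_nat)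
    then show "(\<Sum>n\<in>{n\<in>?A. \<Prod>S dvd n}. 1 / real n ^ 2) \<le> 2 / (real (\<Prod>S) * Y)"
      using sum_inverse_squares_multiples_gt_le[OF _ assms, of "\<Prod>S" N]
      by (simp add: conj_assoc)
    show "prod excess_weight S \<ge> 0" using S by (intro prod_excess_weight_nonneg) simp
  qed
  also have "\<dots> = (2 / Y) * (\<Sum>S\<in>Pow (prime_range 2 N). prod excess_weight S / real (\<Prod>S))"
    by (simp add: sum_distrib_left field_simps)
  also have "\<dots> \<le> (2 / Y) * exp 4"
    using sum_subsets_excess_weight_le[of 2 N] assms by (intro mult_left_mono) auto
  finally show ?thesis by simp
qed

lemma card_large_excess_gt_le:
  assumes "P \<ge> 2" "\<eta> > 0"
  shows "real (card {n\<in>{1..N}. 1 + \<eta> < large_excess P n})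
    \<le> real N * (exp (4 / (real P - 1)) - 1) / (2 * \<eta>)"
proof -
  let ?B = "{n\<in>{1..N}. 1 + \<eta> < large_excess P n}"
  have "real (card ?B) * (2 * \<eta>) = (\<Sum>n\<in>?B. 2 * \<eta>)" by simp
  also have "\<dots> \<le> (\<Sum>n\<in>?B. large_excess P n ^ 2 - 1)"
  proof (rule sum_mono)
    fix n assume "n \<in> ?B"
    then have "(1 + \<eta>) ^ 2 \<le> large_excess P n ^ 2" using assms(2) by (intro power_mono) auto
    moreover have "1 + 2 * \<eta> \<le> (1 + \<eta>) ^ 2" by (simp add: power2_eq_square algebra_simps)
    ultimately show "2 * \<eta> \<le> large_excess P n ^ 2 - 1" by linarith
  qed
  also have "\<dots> \<le> (\<Sum>n\<in>{1..N}. large_excess P n ^ 2 - 1)"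
    using one_le_large_excess by (intro sum_mono2) (auto simp: one_le_power)
  also have "\<dots> \<le> real N * exp (4 / (real P - 1)) - real N"
    using sum_large_excess_sq_le[OF assms(1), of N] by (simp add: sum_subtractf)
  finally show ?thesis
    using assms(2) by (simp add: pos_le_divide_eq algebra_simps)
qed

lemma
  assumes "K > 0" "X > 0"
  shows finite_tail: "finite {n. 1 \<le> n \<and> K * X < real n \<and> real n < X * large_excess 2 n}"
    and card_tail_le:
      "real (card {n. 1 \<le> n \<and> K * X < real n \<and> real n < X * large_excess 2 n}) \<le> 2 * exp 4 * X / K"
proof -
  let ?T = "{n. 1 \<le> n \<and> K * X < real n \<and> real n < X * large_excess 2 n}"
  have "real (card (?T \<inter> {..N})) \<le> 2 * exp 4 * X / K" for N
  proof -
    let ?A = "{n\<in>{1..N}. K * X < real n}"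
    have "real (card (?T \<inter> {..N})) = (\<Sum>n\<in>?T \<inter> {..N}. 1)" by simp
    also have "\<dots> \<le> (\<Sum>n\<in>?T \<inter> {..N}. X ^ 2 * (large_excess 2 n ^ 2 / real n ^ 2))"
    proof (rule sum_mono)
      fix n assume n: "n \<in> ?T \<inter> {..N}"
      then have "real n ^ 2 \<le> (X * large_excess 2 n) ^ 2" by (intro power_mono) auto
      then show "1 \<le> X ^ 2 * (large_excess 2 n ^ 2 / real n ^ 2)"
        using n by (simp add: field_simps power_mult_distrib)
    qed
    also have "\<dots> \<le> (\<Sum>n\<in>?A. X ^ 2 * (large_excess 2 n ^ 2 / real n ^ 2))"
      by (intro sum_mono2) auto
    also have "\<dots> = X ^ 2 * (\<Sum>n\<in>?A. large_excess 2 n ^ 2 / real n ^ 2)"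
      by (simp add: sum_distrib_left)
    also have "\<dots> \<le> X ^ 2 * (2 * exp 4 / (K * X))"
      using sum_large_excess_sq_div_sq_le[of "K * X" N] assms by (intro mult_left_mono) auto
    also have "\<dots> = 2 * exp 4 * X / K"
      using assms by (simp add: field_simps power2_eq_square)
    finally show ?thesis .
  qed
  then show "finite ?T" "real (card ?T) \<le> 2 * exp 4 * X / K"
    by (fact finite_card_le_if_segments_le)+
qed

definition exceptional_set :: "nat \<Rightarrow> real \<Rightarrow> real \<Rightarrow> real \<Rightarrow> nat set" where
  "exceptional_set P \<eta> K X = {n\<in>{1..nat \<lfloor>K * X\<rfloor>}. 1 + \<eta> < large_excess P n}
     \<union> {n. 1 \<le> n \<and> K * X < real n \<and> real n < X * large_excess 2 n}"

lemma
  assumes "P \<ge> 2" "\<eta> > 0" "K > 0" "X > 0"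
  shows finite_exceptional_set: "finite (exceptional_set P \<eta> K X)"
    and card_exceptional_set_le: "real (card (exceptional_set P \<eta> K X))
      \<le> (K * (exp (4 / (real P - 1)) - 1) / (2 * \<eta>) + 2 * exp 4 / K) * X"
proof -
  have "real (nat \<lfloor>K * X\<rfloor>) \<le> K * X" using mult_pos_pos[OF assms(3,4)] by linarith
  moreover have "exp (4 / (real P - 1)) \<ge> 1" using assms by simp
  ultimately have "real (card {n\<in>{1..nat \<lfloor>K * X\<rfloor>}. 1 + \<eta> < large_excess P n})
      \<le> K * X * (exp (4 / (real P - 1)) - 1) / (2 * \<eta>)"
    using card_large_excess_gt_le[OF assms(1,2), of "nat \<lfloor>K * X\<rfloor>"] assms(2)
    by (smt (verit) divide_right_mono mult_right_mono)
  then show "finite (exceptional_set P \<eta> K X)"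
    and "real (card (exceptional_set P \<eta> K X))
      \<le> (K * (exp (4 / (real P - 1)) - 1) / (2 * \<eta>) + 2 * exp 4 / K) * X"
    using finite_tail[OF assms(3,4)] card_tail_le[OF assms(3,4)] card_Un_le[of
        "{n\<in>{1..nat \<lfloor>K * X\<rfloor>}. 1 + \<eta> < large_excess P n}"
        "{n. 1 \<le> n \<and> K * X < real n \<and> real n < X * large_excess 2 n}"]
    by (auto simp: exceptional_set_def algebra_simps simp flip: of_nat_add)
qed

section \<open>The model count\<close>

definition euler_factor :: "int \<Rightarrow> nat \<Rightarrow> real" where
  "euler_factor d p = (if prime p then 1 - 1 / real p + 1 / (real p + real_of_int (chi d p)) else 1)"

lemma Cconst_eq_prodinf: "Cconst d = prodinf (euler_factor d)"
  unfolding Cconst_def euler_factor_def by simp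

lemma euler_factor_eq_1_if_dvd: "odd d \<Longrightarrow> int p dvd d \<Longrightarrow> euler_factor d p = 1"
  by (simp add: euler_factor_def chi_eq_0_if_dvd)

lemma local_factor_euler_factor:
  assumes "prime p"
  shows "real p - 1 + 1 / local_factor d p = real p * euler_factor d p"
proof -
  have p: "real p \<ge> 2" using prime_ge_2_nat[OF assms] by simp
  have "local_factor d p = (real p + real_of_int (chi d p)) / real p"
    using p by (simp add: local_factor_def field_simps)
  then have "1 / local_factor d p = real p / (real p + real_of_int (chi d p))" by simp
  moreover have "real p + real_of_int (chi d p) > 0"
    using abs_chi_le_1[OF assms, of d] p by linarith
  ultimately show ?thesis
    using assms p by (simp add: euler_factor_def algebra_simps)
qed

lemma abs_euler_factor_minus_1_le: "\<bar>euler_factor d n - 1\<bar> \<le> 2 / real n ^ 2"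
proof (cases "prime n")
  case True
  have n: "real n \<ge> 2" using prime_ge_2_nat[OF True] by simp
  have "chi d n \<in> {-1, 0, 1}" using abs_chi_le_1[OF True, of d] by auto
  moreover have "\<bar>1 / (real n - 1) - 1 / real n\<bar> \<le> 2 / real n ^ 2"
    using n by (simp add: divide_simps power2_eq_square algebra_simps)
  moreover have "\<bar>1 / (real n + 1) - 1 / real n\<bar> \<le> 2 / real n ^ 2"
    using n by (simp add: divide_simps power2_eq_square algebra_simps add_pos_pos)
  ultimately show ?thesis
    using True by (auto simp: euler_factor_def)
qed (simp add: euler_factor_def)

lemma partial_euler_product_tendsto: "(\<lambda>P. \<Prod>k<P. euler_factor d k) \<longlonglongrightarrow> Cconst d"
proof -
  have "summable (\<lambda>n. 2 * inverse (real n ^ 2))"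
    by (intro summable_mult inverse_power_summable) simp
  then have "summable (\<lambda>n. norm (euler_factor d n - 1))"
    by (rule summable_comparison_test')
      (use abs_euler_factor_minus_1_le in \<open>simp add: divide_inverse\<close>)
  then have "convergent_prod (euler_factor d)"
    by (intro abs_convergent_prod_imp_convergent_prod) (simp add: abs_convergent_prod_conv_summable)
  then have "(\<lambda>n. \<Prod>k<Suc n. euler_factor d k) \<longlonglongrightarrow> Cconst d"
    unfolding Cconst_eq_prodinf lessThan_Suc_atMost by (rule convergent_prod_LIMSEQ)
  then show ?thesis by (rule LIMSEQ_imp_Suc)
qed

lemma coprime_prod_small_primes:
  assumes "\<forall>p::nat. prime p \<and> p dvd a \<longrightarrow> int p dvd d"
  shows "coprime a (\<Prod>(small_primes d P))"
proof (rule prod_coprime_right)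
  fix p assume "p \<in> small_primes d P"
  then have "prime p" "\<not> p dvd a" using assms by (auto simp: small_primes_def)
  then show "coprime a p" using prime_imp_coprime coprime_commute by blast
qed

lemma sum_inverse_small_part:
  assumes "odd d"
  shows "(\<Sum>t<\<Prod>(small_primes d P). 1 / small_part d P t)
    = real (\<Prod>(small_primes d P)) * (\<Prod>k<P. euler_factor d k)"
proof -
  have "euler_factor d k = 1" if "k \<in> {..<P} - small_primes d P" for k
  proof -
    from that have "\<not> prime k \<or> int k dvd d" by (auto simp: small_primes_def)
    then show ?thesis
    proof
      assume "\<not> prime k"
      then show ?thesis by (simp add: euler_factor_def)
    qed (rule euler_factor_eq_1_if_dvd[OF assms])
  qed
  then have "(\<Prod>k<P. euler_factor d k) = (\<Prod>k\<in>small_primes d P. euler_factor d k)"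
    by (intro prod.mono_neutral_right) (auto simp: small_primes_def)
  have "(\<Sum>t<\<Prod>(small_primes d P). 1 / small_part d P t)
      = (\<Prod>p\<in>small_primes d P. real p - 1 + 1 / local_factor d p)"
    unfolding small_part_def
    by (rule sum_inverse_divisor_weight[OF finite_small_primes]) (auto simp: small_primes_def)
  also have "\<dots> = (\<Prod>p\<in>small_primes d P. real p * euler_factor d p)"
    by (intro prod.cong refl local_factor_euler_factor) (auto simp: small_primes_def)
  finally show ?thesis
    using \<open>(\<Prod>k<P. euler_factor d k) = _\<close> by (simp add: prod.distrib)
qed

text \<open>Since \<open>small_part d P\<close> is periodic modulo \<open>\<Prod>(small_primes d P)\<close>, which is coprime to \<open>a\<close>,
  its reciprocal has the same mean over each residue class modulo \<open>a\<close>.\<close>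
lemma sum_inverse_small_part_residue_class:
  assumes "odd d" "coprime a (\<Prod>(small_primes d P))" "s < a"
  shows "(\<Sum>t\<in>{t\<in>{..<a * \<Prod>(small_primes d P)}. t mod a = s}. 1 / small_part d P t)
    = real (\<Prod>(small_primes d P)) * (\<Prod>k<P. euler_factor d k)"
proof -
  let ?Q = "\<Prod>(small_primes d P)"
  have periodic: "small_part d P (t mod ?Q) = small_part d P t" for t
    by (simp add: small_part_def divisor_weight_mod finite_small_primes)
  have "(\<Sum>t\<in>{t\<in>{..<a * ?Q}. t mod a = s}. 1 / small_part d P t)
      = (\<Sum>t<a * ?Q. if t mod a = s then 1 / small_part d P t else 0)"
    by (rule sum.inter_filter) simp
  also have "\<dots> = (\<Sum>t<a * ?Q. (if t mod a = s then 1 else 0) * (1 / small_part d P (t mod ?Q)))"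
    by (intro sum.cong) (auto simp: periodic)
  also have "\<dots> = (\<Sum>t<a. if t = s then 1 else 0) * (\<Sum>t<?Q. 1 / small_part d P t)"
    using assms(2,3) prod_small_primes_pos by (intro sum_mod_mult_coprime) auto
  finally show ?thesis using assms(1,3) sum_inverse_small_part by simp
qed

definition model_set :: "int \<Rightarrow> nat \<Rightarrow> nat \<Rightarrow> nat \<Rightarrow> real \<Rightarrow> nat set" where
  "model_set d P a s Y = {n. 1 \<le> n \<and> n mod a = s \<and> real n * small_part d P n < Y}"

lemma
  assumes "odd d" "coprime a (\<Prod>(small_primes d P))" "s < a" "Y \<ge> 0"
  shows finite_model_set: "finite (model_set d P a s Y)"
    and card_model_set: "\<bar>real (card (model_set d P a s Y)) - Y * (\<Prod>k<P. euler_factor d k) / real a\<bar>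
      \<le> 2 * real a * real (\<Prod>(small_primes d P))"
proof -
  define M where "M = a * \<Prod>(small_primes d P)"
  define T where "T = {t\<in>{..<M}. t mod a = s}"
  define B where "B t = {n. 1 \<le> n \<and> n mod M = t \<and> real n < Y / small_part d P t}" for t
  have M: "M > 0" using assms(3) prod_small_primes_pos by (simp add: M_def)
  have periodic: "small_part d P (n mod M) = small_part d P n" for n
    by (simp add: small_part_def divisor_weight_mod finite_small_primes M_def)
  have mod_a: "n mod M mod a = n mod a" for n by (simp add: M_def mod_mod_cancel)
  have "model_set d P a s Y = (\<Union>t\<in>T. B t)"
  proof safe
    fix n assume n: "n \<in> model_set d P a s Y"
    then have "real n < Y / small_part d P (n mod M)"
      using small_part_pos[of d P n] by (simp add: model_set_def periodic pos_less_divide_eq)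
    with n show "n \<in> (\<Union>t\<in>T. B t)" using M mod_a
      by (auto simp: T_def B_def model_set_def intro!: bexI[of _ "n mod M"])
  next
    fix n t assume "t \<in> T" "n \<in> B t"
    then show "n \<in> model_set d P a s Y" using mod_a small_part_pos[of d P n] periodic[of n]
      by (auto simp: T_def B_def model_set_def pos_less_divide_eq)
  qed
  have finT: "finite T" by (simp add: T_def)
  have B: "finite (B t) \<and> \<bar>real (card (B t)) - Y / small_part d P t / real M\<bar> \<le> 2" if "t \<in> T" for t
    using that card_residue_class_less[of t M "Y / small_part d P t"] small_part_pos[of d P t] assms(4)
    by (auto simp: T_def B_def)
  have "card (model_set d P a s Y) = (\<Sum>t\<in>T. card (B t))"
    unfolding \<open>model_set d P a s Y = _\<close> using B finT by (intro card_UN_disjoint) (auto simp: B_def)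
  moreover show "finite (model_set d P a s Y)"
    unfolding \<open>model_set d P a s Y = _\<close> using B finT by auto
  ultimately have "\<bar>real (card (model_set d P a s Y)) - (\<Sum>t\<in>T. Y / small_part d P t / real M)\<bar>
      = \<bar>\<Sum>t\<in>T. real (card (B t)) - Y / small_part d P t / real M\<bar>"
    by (simp add: sum_subtractf)
  also have "\<dots> \<le> (\<Sum>t\<in>T. \<bar>real (card (B t)) - Y / small_part d P t / real M\<bar>)"
    by (rule sum_abs)
  also have "\<dots> \<le> (\<Sum>t\<in>T. 2)"
    using B by (intro sum_mono) auto
  also have "\<dots> = 2 * real (card T)" by simp
  also have "\<dots> \<le> 2 * real M"
    using card_mono[of "{..<M}" T] by (auto simp: T_def)
  finally have "\<bar>real (card (model_set d P a s Y)) - (\<Sum>t\<in>T. Y / small_part d P t / real M)\<bar>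
      \<le> 2 * real M" .
  moreover have "(\<Sum>t\<in>T. Y / small_part d P t / real M) = Y / real M * (\<Sum>t\<in>T. 1 / small_part d P t)"
    by (simp add: sum_distrib_left mult.commute)
  moreover have "(\<Sum>t\<in>T. 1 / small_part d P t)
      = real (\<Prod>(small_primes d P)) * (\<Prod>k<P. euler_factor d k)"
    unfolding T_def M_def by (rule sum_inverse_small_part_residue_class[OF assms(1-3)])
  moreover have "real (\<Prod>(small_primes d P)) > 0" using prod_small_primes_pos of_nat_0_less_iff by blast
  ultimately show "\<bar>real (card (model_set d P a s Y)) - Y * (\<Prod>k<P. euler_factor d k) / real a\<bar>
      \<le> 2 * real a * real (\<Prod>(small_primes d P))"
    by (simp add: M_def)
qed

section \<open>Comparison with the model count\<close>

definition level_set :: "int \<Rightarrow> nat \<Rightarrow> nat \<Rightarrow> real \<Rightarrow> nat set" where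
  "level_set d a s X = {n. 1 \<le> n \<and> n mod a = s \<and> Ffun d n < X}"

lemma Ffun_eq_small_large:
  "odd d \<Longrightarrow> n \<ge> 1 \<Longrightarrow> Ffun d n = real n * small_part d P n * large_part d P n"
  by (simp add: Ffun_eq_prod_local_factor prod_local_factor_eq_small_large)

lemma exceptional_set_cases:
  assumes "1 \<le> n" "n \<notin> exceptional_set P \<eta> K X"
  obtains "large_excess P n \<le> 1 + \<eta>" | "X * large_excess 2 n \<le> real n"
proof (cases "real n \<le> K * X")
  case True
  then have "n \<le> nat \<lfloor>K * X\<rfloor>" by linarith
  then show ?thesis using assms that by (auto simp: exceptional_set_def)
qed (use assms that in \<open>auto simp: exceptional_set_def\<close>)

lemma level_set_subset:
  assumes "odd d" "\<eta> > 0" "X > 0"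
  shows "level_set d a s X \<subseteq> model_set d P a s ((1 + \<eta>) * X) \<union> exceptional_set P \<eta> K X"
proof
  fix n assume n: "n \<in> level_set d a s X"
  let ?H = "small_part d P n" and ?L = "large_part d P n"
  have H: "?H > 0" and L: "?L > 0" by (rule small_part_pos, rule large_part_pos)
  have n1: "n \<ge> 1" and F: "real n * ?H * ?L < X"
    using n Ffun_eq_small_large[OF assms(1)] by (auto simp: level_set_def)
  have "real n * ?H < (1 + \<eta>) * X" if "n \<notin> exceptional_set P \<eta> K X"
    using n1 that
  proof (cases rule: exceptional_set_cases)
    case 1
    then have "1 / ?L \<le> 1 + \<eta>" using inverse_large_part_le_large_excess[of d P n] by linarith
    then have "1 \<le> ?L * (1 + \<eta>)" using L by (simp add: field_simps)
    then have "real n * ?H * 1 \<le> real n * ?H * (?L * (1 + \<eta>))"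
      using H by (intro mult_left_mono) auto
    then have "real n * ?H \<le> real n * ?H * ?L * (1 + \<eta>)" by (simp add: ac_simps)
    also have "\<dots> < (1 + \<eta>) * X" using F assms(2) by simp
    finally show ?thesis .
  next
    case 2
    have "1 / (?H * ?L) \<le> large_excess 2 n"
      using inverse_prod_local_factor_le_large_excess[of d n]
        prod_local_factor_eq_small_large[OF assms(1), of n P] n1 by simp
    then have "X * (1 / (?H * ?L)) \<le> X * large_excess 2 n"
      using assms(3) by (intro mult_left_mono) auto
    with 2 have "X / (?H * ?L) \<le> real n" by simp
    then have "X \<le> real n * ?H * ?L" using H L by (simp add: divide_le_eq mult.assoc)
    with F show ?thesis by simp
  qed
  with n show "n \<in> model_set d P a s ((1 + \<eta>) * X) \<union> exceptional_set P \<eta> K X"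
    by (auto simp: level_set_def model_set_def)
qed

lemma model_set_subset:
  assumes "odd d" "\<eta> > 0" "X > 0"
  shows "model_set d P a s (X / (1 + \<eta>)) \<subseteq> level_set d a s X \<union> exceptional_set P \<eta> K X"
proof
  fix n assume n: "n \<in> model_set d P a s (X / (1 + \<eta>))"
  let ?H = "small_part d P n" and ?L = "large_part d P n"
  have H: "?H > 0" and L: "?L > 0" by (rule small_part_pos, rule large_part_pos)
  have n1: "n \<ge> 1" and M: "real n * ?H * (1 + \<eta>) < X"
    using n assms(2) by (auto simp: model_set_def field_simps)
  have "Ffun d n < X" if "n \<notin> exceptional_set P \<eta> K X"
    using n1 that
  proof (cases rule: exceptional_set_cases)
    case 1
    then have "?L \<le> 1 + \<eta>" using large_part_le_large_excess[of d P n] by linarith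
    then have "real n * ?H * ?L \<le> real n * ?H * (1 + \<eta>)"
      using H by (intro mult_left_mono) auto
    then have "Ffun d n \<le> real n * ?H * (1 + \<eta>)"
      by (simp add: Ffun_eq_small_large[OF assms(1) n1, of P])
    with M show ?thesis by simp
  next
    case 2
    have "X * (1 / ?H) \<le> X * large_excess 2 n"
      using inverse_small_part_le_large_excess[of n d P] n1 assms(3) by (intro mult_left_mono) auto
    with 2 have "X / ?H \<le> real n" by simp
    then have "X \<le> real n * ?H" using H by (simp add: divide_le_eq)
    also have "\<dots> \<le> real n * ?H * (1 + \<eta>)"
      using assms(2) H by (simp add: mult_le_cancel_left1 not_less)
    finally have "X \<le> real n * ?H * (1 + \<eta>)" .
    with M show ?thesis by simp
  qed
  with n show "n \<in> level_set d a s X \<union> exceptional_set P \<eta> K X"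
    by (auto simp: level_set_def model_set_def)
qed

lemma card_level_set_error:
  assumes "odd d" "coprime a (\<Prod>(small_primes d P))" "s < a" "P \<ge> 2" "\<eta> > 0" "K > 0" "X > 0"
  defines "m \<equiv> \<Prod>k<P. euler_factor d k"
  shows "\<bar>real (card (level_set d a s X)) - m / real a * X\<bar>
    \<le> (\<eta> * \<bar>m\<bar> / real a + K * (exp (4 / (real P - 1)) - 1) / (2 * \<eta>) + 2 * exp 4 / K) * X
      + 2 * real a * real (\<Prod>(small_primes d P))"
proof -
  let ?E = "exceptional_set P \<eta> K X"
  let ?up = "model_set d P a s ((1 + \<eta>) * X)" and ?lo = "model_set d P a s (X / (1 + \<eta>))"
  have a: "real a > 0" using assms(3) by simp
  have finE: "finite ?E" and cardE: "real (card ?E)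
      \<le> (K * (exp (4 / (real P - 1)) - 1) / (2 * \<eta>) + 2 * exp 4 / K) * X"
    using finite_exceptional_set card_exceptional_set_le assms(4-7) by blast+
  have fin_up: "finite ?up" and card_up: "real (card ?up) \<le> (1 + \<eta>) * X * m / real a
      + 2 * real a * real (\<Prod>(small_primes d P))"
    using finite_model_set[OF assms(1-3)] card_model_set[OF assms(1-3), of "(1 + \<eta>) * X"] assms(5,7)
    by (auto simp: m_def abs_le_iff)
  have card_lo: "real (card ?lo) \<ge> X / (1 + \<eta>) * m / real a
      - 2 * real a * real (\<Prod>(small_primes d P))"
    using card_model_set[OF assms(1-3), of "X / (1 + \<eta>)"] assms(5,7)
    by (auto simp: m_def abs_le_iff)
  have "card (level_set d a s X) \<le> card (?up \<union> ?E)"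
    using level_set_subset[OF assms(1,5,7)] fin_up finE by (intro card_mono) auto
  then have upper: "real (card (level_set d a s X)) \<le> real (card ?up) + real (card ?E)"
    using card_Un_le[of ?up ?E] by linarith
  have fin_level: "finite (level_set d a s X)"
    using level_set_subset[OF assms(1,5,7)] fin_up finE by (meson finite_Un finite_subset)
  have "card ?lo \<le> card (level_set d a s X \<union> ?E)"
    using model_set_subset[OF assms(1,5,7)] fin_level finE by (intro card_mono) auto
  then have lower: "real (card ?lo) \<le> real (card (level_set d a s X)) + real (card ?E)"
    using card_Un_le[of "level_set d a s X" ?E] by linarith
  have "(1 + \<eta>) * X * m / real a = X / real a * ((1 + \<eta>) * m)" by simp
  also have "\<dots> \<le> X / real a * (m + \<eta> * \<bar>m\<bar>)"
    using a assms(5,7) by (intro mult_left_mono) (auto simp: algebra_simps mult_left_mono)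
  also have "\<dots> = m / real a * X + \<eta> * \<bar>m\<bar> / real a * X" by (simp add: algebra_simps)
  finally have up: "(1 + \<eta>) * X * m / real a \<le> m / real a * X + \<eta> * \<bar>m\<bar> / real a * X" .
  have "m - m / (1 + \<eta>) = \<eta> * m / (1 + \<eta>)" using assms(5) by (simp add: field_simps)
  also have "\<dots> \<le> \<eta> * \<bar>m\<bar> / (1 + \<eta>)"
    using assms(5) by (intro divide_right_mono mult_left_mono) auto
  also have "\<dots> \<le> \<eta> * \<bar>m\<bar>"
    using assms(5) by (simp add: mult_imp_div_pos_le mult_le_cancel_left1 order.strict_iff_not)
  finally have "m - \<eta> * \<bar>m\<bar> \<le> m / (1 + \<eta>)" by linarith
  then have "X / real a * (m - \<eta> * \<bar>m\<bar>) \<le> X / real a * (m / (1 + \<eta>))"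
    using a assms(7) by (intro mult_left_mono) auto
  then have lo: "m / real a * X - \<eta> * \<bar>m\<bar> / real a * X \<le> X / (1 + \<eta>) * m / real a"
    by (simp add: algebra_simps)
  show ?thesis
    using upper lower card_up card_lo cardE up lo by (simp add: abs_le_iff algebra_simps)
qed

lemma eventually_good_cutoff:
  fixes \<delta> \<theta> :: real
  assumes "\<delta> > 0" "\<theta> > 0"
  shows "\<forall>\<^sub>F P in sequentially. P \<ge> 2 \<and> \<bar>(\<Prod>k<P. euler_factor d k) - Cconst d\<bar> < \<delta>
    \<and> exp (4 / (real P - 1)) - 1 < \<theta>"
proof -
  have "(\<lambda>P::nat. exp (4 / (real P - 1))) \<longlonglongrightarrow> 1" by real_asymp
  from tendstoD[OF this assms(2)] tendstoD[OF partial_euler_product_tendsto assms(1)]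
    eventually_ge_at_top[of 2]
  show ?thesis by eventually_elim (auto simp: dist_real_def)
qed

lemma smallo_if_linear_error_bounds:
  fixes f :: "real \<Rightarrow> real"
  assumes "\<And>\<epsilon>. \<epsilon> > 0 \<Longrightarrow> \<exists>B. \<forall>X>0. \<bar>f X\<bar> \<le> \<epsilon> * X + B"
  shows "f \<in> o(\<lambda>X. X)"
proof (rule landau_o.smallI)
  fix \<epsilon> :: real assume "\<epsilon> > 0"
  then obtain B where B: "\<And>X. X > 0 \<Longrightarrow> \<bar>f X\<bar> \<le> \<epsilon> / 2 * X + B"
    using assms[of "\<epsilon> / 2"] by auto
  show "\<forall>\<^sub>F X in at_top. norm (f X) \<le> \<epsilon> * norm X"
    using eventually_ge_at_top[of "max 1 (2 * \<bar>B\<bar> / \<epsilon>)"]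
  proof eventually_elim
    case (elim X)
    then have "X > 0" "\<bar>B\<bar> \<le> \<epsilon> / 2 * X"
      using \<open>\<epsilon> > 0\<close> by (auto simp: field_simps)
    then show ?case using B[of X] by simp
  qed
qed

lemma card_level_set_approx:
  assumes "odd d" "\<forall>p::nat. prime p \<and> p dvd a \<longrightarrow> int p dvd d" "s < a" "\<epsilon> > 0"
  shows "\<exists>B. \<forall>X>0. \<bar>real (card (level_set d a s X)) - Cconst d / real a * X\<bar> \<le> \<epsilon> * X + B"
proof -
  define C where "C = Cconst d"
  have a: "real a > 0" using assms(3) by simp
  define K where "K = 8 * exp 4 / \<epsilon>"
  define \<eta> where "\<eta> = \<epsilon> * real a / (4 * (\<bar>C\<bar> + 1))"
  have K: "K > 0" and \<eta>: "\<eta> > 0" using assms(4) a by (simp_all add: K_def \<eta>_def)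
  obtain P where P: "P \<ge> 2" "\<bar>(\<Prod>k<P. euler_factor d k) - C\<bar> < min 1 (\<epsilon> * real a / 4)"
    "exp (4 / (real P - 1)) - 1 < \<epsilon> * \<eta> / (2 * K)"
    using eventually_good_cutoff[of "min 1 (\<epsilon> * real a / 4)" "\<epsilon> * \<eta> / (2 * K)" d] assms(4) a K \<eta>
    by (auto simp: C_def eventually_sequentially)
  define m where "m = (\<Prod>k<P. euler_factor d k)"
  \<comment> \<open>each of the four error terms contributes at most \<open>\<epsilon>/4\<close>\<close>
  have "\<eta> * \<bar>m\<bar> / real a \<le> \<epsilon> / 4"
  proof -
    have "\<bar>m - C\<bar> < 1" using P(2) by (simp add: m_def)
    then have "\<bar>m\<bar> \<le> \<bar>C\<bar> + 1" by linarith
    then have "\<eta> * \<bar>m\<bar> \<le> \<eta> * (\<bar>C\<bar> + 1)" using \<eta> by (intro mult_left_mono) auto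
    also have "\<dots> = \<epsilon> * real a / 4"
      using abs_ge_zero[of C] unfolding \<eta>_def by (simp add: field_simps)
    finally show ?thesis using a by (simp add: divide_le_eq)
  qed
  moreover have "K * (exp (4 / (real P - 1)) - 1) / (2 * \<eta>) \<le> \<epsilon> / 4"
    using P(3) K \<eta> by (simp add: field_simps)
  moreover have "2 * exp 4 / K = \<epsilon> / 4" using assms(4) by (simp add: K_def)
  ultimately have total: "\<eta> * \<bar>m\<bar> / real a + K * (exp (4 / (real P - 1)) - 1) / (2 * \<eta>)
      + 2 * exp 4 / K \<le> 3 / 4 * \<epsilon>" by linarith
  have "\<bar>real (card (level_set d a s X)) - C / real a * X\<bar>
      \<le> \<epsilon> * X + 2 * real a * real (\<Prod>(small_primes d P))" if "X > 0" for X
  proof -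
    have "\<bar>m / real a * X - C / real a * X\<bar> = \<bar>m - C\<bar> / real a * X"
      using that a by (simp add: abs_mult flip: left_diff_distrib diff_divide_distrib)
    also have "\<dots> \<le> \<epsilon> / 4 * X"
      using P(2) a that by (intro mult_right_mono) (auto simp: m_def divide_le_eq)
    finally have "\<bar>m / real a * X - C / real a * X\<bar> \<le> 1 / 4 * (\<epsilon> * X)" by simp
    moreover have "(\<eta> * \<bar>m\<bar> / real a + K * (exp (4 / (real P - 1)) - 1) / (2 * \<eta>) + 2 * exp 4 / K) * X
        \<le> 3 / 4 * (\<epsilon> * X)"
      using mult_right_mono[OF total, of X] that by (simp add: mult.assoc)
    ultimately show ?thesis
      using card_level_set_error[OF assms(1) coprime_prod_small_primes[OF assms(2)] assms(3) P(1) \<eta> K that]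
      unfolding m_def[symmetric] abs_le_iff by linarith
  qed
  then show ?thesis unfolding C_def by blast
qed

theorem lemma3p8:
  fixes d :: int and a :: nat and r :: int
  assumes "d > 0" and "squarefree d" and "d mod 4 = 3"
    and "a > 0" and "\<forall>p::nat. prime p \<and> p dvd a \<longrightarrow> int p dvd d"
  shows "(\<lambda>X::real. real (card {n::nat. n \<ge> 1 \<and> [int n = r] (mod int a) \<and> Ffun d n < X})
            - Cconst d / real a * X) \<in> o(\<lambda>X. X)"
proof -
  define s where "s = nat (r mod int a)"
  have "s < a" using assms(4) by (simp add: s_def nat_less_iff)
  have "[int n = r] (mod int a) \<longleftrightarrow> n mod a = s" for n
  proof -
    have "[int n = r] (mod int a) \<longleftrightarrow> int (n mod a) = r mod int a"
      by (simp add: unique_euclidean_semiring_class.cong_def zmod_int)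
    also have "\<dots> \<longleftrightarrow> n mod a = s" using assms(4) by (auto simp: s_def)
    finally show ?thesis .
  qed
  then have "{n. n \<ge> 1 \<and> [int n = r] (mod int a) \<and> Ffun d n < X} = level_set d a s X" for X
    by (auto simp: level_set_def)
  \<comment> \<open>of the hypotheses on \<open>d\<close>, only its oddness is needed\<close>
  moreover have "odd d" using assms(3) by presburger
  ultimately show ?thesis
    using card_level_set_approx[OF _ assms(5) \<open>s < a\<close>] by (simp add: smallo_if_linear_error_bounds)
qed

end
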